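(* Let $(X,d)$ be a complete separable metric space and let $(\xi_j)_{j=1}^n$ be a time-homogeneous Markov process with state space $X$, initial distribution $P^{(1)}$ and transition kernel $p(\cdot\mid x)$. Suppose there exist constants $\kappa_1>0$ and $L\ge 0$ such that: (i) $P^{(1)}$ and every $p(\cdot\mid x)$ ($x\in X$) satisfy $GC(\kappa_1)$ on $(X,d)$; (ii) $x\mapsto p(\cdot\mid x)$ is $L$-Lipschitz from $(X,d)$ to $(\mathrm{Prob}_1(X),W_1)$, i.e. $W_1(p(\cdot\mid x),p(\cdot\mid y))\le L\,d(x,y)$ for all $x,y\in X$. Then the joint law $P^{(n)}$ of $(\xi_1,\dots,\xi_n)$ satisfies $GC(\kappa_n)$ on $(X^n,d^{(1)})$, where $$\kappa_n=\kappa_1\sum_{m=1}^{n}\Bigl(\sum_{k=0}^{m-1}L^k\Bigr)^2.$$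
   Context: $\mathrm{Prob}(X)$ is the set of Radon (Borel) probability measures on $X$. A measure $\mu\in\mathrm{Prob}(X)$ satisfies the Gaussian concentration inequality $GC(\kappa)$ on $(X,d)$ if $\int_X e^{tF}\,d\mu\le \exp\bigl(t\int_X F\,d\mu+\kappa t^2/2\bigr)$ for all $t\in\mathbb R$ and all $1$-Lipschitz $F:(X,d)\to\mathbb R$. For $1\le s<\infty$, $\mathrm{Prob}_s(X)$ is the set of $\nu\in\mathrm{Prob}(X)$ with $\int d(x_0,y)^s\nu(dy)<\infty$ for some (equivalently all) $x_0$, and $W_s(\mu,\nu)=\inf_\pi\bigl(\iint d(x,y)^s\pi(dx\,dy)\bigr)^{1/s}$, the infimum over couplings $\pi$ of $\mu$ and $\nu$. On $X^k$, $d^{(s)}(x^{(k)},y^{(k)})=(\sum_{j=1}^k d(x_j,y_j)^s)^{1/s}$. The joint law is $P^{(n)}(dx^{(n)})=p(dx_n\mid x_{n-1})\cdots p(dx_2\mid x_1)P^{(1)}(dx_1)$. *)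

theory Defs
  imports "HOL-Probability.Probability"
begin

text \<open>Lipschitz functions are required to be integrable (so that the
  mean is meaningful) and exp(tF) integrable.\<close>
definition GC :: "('b \<Rightarrow> 'b \<Rightarrow> real) \<Rightarrow> real \<Rightarrow> 'b measure \<Rightarrow> bool" where
  "GC d \<kappa> M \<longleftrightarrow>
     (\<forall>F::'b \<Rightarrow> real. (\<forall>x\<in>space M. \<forall>y\<in>space M. \<bar>F x - F y\<bar> \<le> d x y) \<longrightarrow>
        integrable M F \<and>
        (\<forall>t::real. integrable M (\<lambda>x. exp (t * F x)) \<and>
           (\<integral>x. exp (t * F x) \<partial>M) \<le> exp (t * (\<integral>x. F x \<partial>M) + \<kappa> * t\<^sup>2 / 2)))"

definition couplings :: "'a::metric_space measure \<Rightarrow> 'a measure \<Rightarrow> ('a \<times> 'a) measure set" where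
  "couplings \<mu> \<nu> = {\<pi>. prob_space \<pi> \<and> sets \<pi> = sets (borel \<Otimes>\<^sub>M borel) \<and>
      distr \<pi> borel fst = \<mu> \<and> distr \<pi> borel snd = \<nu>}"

definition W1 :: "'a::metric_space measure \<Rightarrow> 'a measure \<Rightarrow> ennreal" where
  "W1 \<mu> \<nu> = (INF \<pi>\<in>couplings \<mu> \<nu>. \<integral>\<^sup>+ z. ennreal (dist (fst z) (snd z)) \<partial>\<pi>)"

definition Prob1 :: "'a::metric_space measure \<Rightarrow> bool" where
  "Prob1 \<nu> \<longleftrightarrow> (\<exists>x0. (\<integral>\<^sup>+ y. ennreal (dist x0 y) \<partial>\<nu>) < \<infinity>)"

text \<open>The metric d^(1) on X^n, points of X^n represented as functions on {..<n}.\<close>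
definition dist1 :: "nat \<Rightarrow> (nat \<Rightarrow> 'a::metric_space) \<Rightarrow> (nat \<Rightarrow> 'a) \<Rightarrow> real" where
  "dist1 n x y = (\<Sum>j<n. dist (x j) (y j))"

text \<open>Joint law P^(n) of (xi_1,...,xi_n) (indexed 0..n-1) on the product space
  PiM {..<n} (\<lambda>_. borel).\<close>
fun joint :: "('a::topological_space \<Rightarrow> 'a measure) \<Rightarrow> 'a measure \<Rightarrow> nat \<Rightarrow> (nat \<Rightarrow> 'a) measure" where
  "joint p P1 0 = PiM {} (\<lambda>_. borel)"
| "joint p P1 (Suc n) =
     bind (joint p P1 n)
       (\<lambda>x. distr (if n = 0 then P1 else p (x (n - 1)))
                  (PiM {..<Suc n} (\<lambda>_. borel)) (\<lambda>y. x(n := y)))"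

end

theory Submission
  imports Defs
begin

(* Induction on n, integrating out the last coordinate, for functions F that are Lipschitz
   for a weighted metric  sum_j a_j d(x_j, y_j).  Given the first n coordinates, F is
   a_n-Lipschitz in the last one, so GC(kappa1) of its conditional law p(. | x_(n-1)) makes F
   sub-Gaussian there with variance proxy kappa1 a_n^2.  The conditional mean
   G(x) = int F(x, y) p(dy | x_(n-1)) is again weighted-Lipschitz, with a_(n-1) replaced by
   a_(n-1) + L a_n (Kantorovich-Rubinstein with the W1-Lipschitz kernel).  Variance proxies
   add under mixing, so by induction the joint law has proxy kappa1 sum_k b_k^2 with
   b_k = sum_(j >= k) a_j L^(j-k); for a = 1 this is kappa_n. *)

definition subgaussian :: "'b measure \<Rightarrow> real \<Rightarrow> ('b \<Rightarrow> real) \<Rightarrow> bool" where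
  "subgaussian M \<kappa> F \<longleftrightarrow> integrable M F \<and>
     (\<forall>t. integrable M (\<lambda>x. exp (t * F x)) \<and>
        (\<integral>x. exp (t * F x) \<partial>M) \<le> exp (t * (\<integral>x. F x \<partial>M) + \<kappa> * t\<^sup>2 / 2))"

lemma GC_iff_subgaussian:
  "GC d \<kappa> M \<longleftrightarrow>
     (\<forall>F. (\<forall>x\<in>space M. \<forall>y\<in>space M. \<bar>F x - F y\<bar> \<le> d x y) \<longrightarrow> subgaussian M \<kappa> F)"
  by (simp add: GC_def subgaussian_def)

lemma subgaussian_cong:
  assumes "\<And>x. x \<in> space M \<Longrightarrow> F x = G x"
  shows "subgaussian M \<kappa> F \<longleftrightarrow> subgaussian M \<kappa> G"
proof -
  have "integrable M F \<longleftrightarrow> integrable M G"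
    "integrable M (\<lambda>x. exp (t * F x)) \<longleftrightarrow> integrable M (\<lambda>x. exp (t * G x))" for t
    using assms by (intro Bochner_Integration.integrable_cong; simp)+
  moreover have "integral\<^sup>L M F = integral\<^sup>L M G"
    "(\<integral>x. exp (t * F x) \<partial>M) = (\<integral>x. exp (t * G x) \<partial>M)" for t
    using assms by (intro Bochner_Integration.integral_cong; simp)+
  ultimately show ?thesis
    by (simp add: subgaussian_def)
qed

lemma subgaussian_scale:
  assumes "subgaussian M \<kappa> F"
  shows "subgaussian M (\<kappa> * c\<^sup>2) (\<lambda>x. c * F x)"
proof -
  have "(\<integral>x. exp (t * (c * F x)) \<partial>M) \<le> exp (t * (\<integral>x. c * F x \<partial>M) + \<kappa> * c\<^sup>2 * t\<^sup>2 / 2)" for t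
    using assms[unfolded subgaussian_def, THEN conjunct2, rule_format, of "t * c"]
    by (simp add: mult.assoc mult.left_commute mult.commute power_mult_distrib)
  then show ?thesis
    using assms by (simp add: subgaussian_def mult.assoc[symmetric])
qed

lemma GC_imp_subgaussian_lipschitz:
  assumes "GC d \<kappa> M" and "c > 0"
    and "\<And>x y. x \<in> space M \<Longrightarrow> y \<in> space M \<Longrightarrow> \<bar>g x - g y\<bar> \<le> c * d x y"
  shows "subgaussian M (\<kappa> * c\<^sup>2) g"
proof -
  have "\<bar>g x / c - g y / c\<bar> \<le> d x y" if "x \<in> space M" "y \<in> space M" for x y
    using assms(2) assms(3)[OF that] by (simp add: diff_divide_distrib[symmetric] pos_divide_le_eq mult.commute)
  then have "subgaussian M \<kappa> (\<lambda>x. g x / c)"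
    using assms(1) by (simp add: GC_iff_subgaussian)
  from subgaussian_scale[OF this, of c] show ?thesis
    using \<open>c > 0\<close> by simp
qed

lemma integrable_of_integrable_exp:
  fixes F :: "'b \<Rightarrow> real"
  assumes "F \<in> borel_measurable M"
    and "integrable M (\<lambda>x. exp (F x))" and "integrable M (\<lambda>x. exp (- F x))"
  shows "integrable M F"
proof (rule Bochner_Integration.integrable_bound)
  show "integrable M (\<lambda>x. exp (F x) + exp (- F x))"
    using assms(2,3) by (rule Bochner_Integration.integrable_add)
  have "\<bar>F x\<bar> \<le> exp (F x) + exp (- F x)" for x
    using exp_ge_add_one_self[of "F x"] exp_ge_add_one_self[of "- F x"] exp_gt_zero[of "F x"]
      exp_gt_zero[of "- F x"] by linarith
  then show "AE x in M. norm (F x) \<le> norm (exp (F x) + exp (- F x))"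
    by (simp add: add_pos_pos)
qed (use assms(1) in simp)

lemma subgaussian_distr:
  assumes "f \<in> M \<rightarrow>\<^sub>M K" and "F \<in> borel_measurable K"
  shows "subgaussian (distr M K f) \<kappa> F \<longleftrightarrow> subgaussian M \<kappa> (\<lambda>x. F (f x))"
  using assms by (simp add: subgaussian_def integrable_distr_eq integral_distr)

lemma nn_integral_bind_integral:
  fixes h :: "'b \<Rightarrow> real"
  assumes N: "N \<in> M \<rightarrow>\<^sub>M subprob_algebra K" and h: "h \<in> borel_measurable K" "\<And>y. 0 \<le> h y"
    and int: "\<And>x. x \<in> space M \<Longrightarrow> integrable (N x) h"
  shows "(\<integral>\<^sup>+y. h y \<partial>bind M N) = (\<integral>\<^sup>+x. ennreal (\<integral>y. h y \<partial>N x) \<partial>M)"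
proof -
  have "(\<integral>\<^sup>+y. h y \<partial>bind M N) = (\<integral>\<^sup>+x. \<integral>\<^sup>+y. h y \<partial>N x \<partial>M)"
    using h(1) N by (intro nn_integral_bind) auto
  also have "\<dots> = (\<integral>\<^sup>+x. ennreal (\<integral>y. h y \<partial>N x) \<partial>M)"
    using int h(2) by (intro nn_integral_cong nn_integral_eq_integral) auto
  finally show ?thesis .
qed

lemma
  fixes h :: "'b \<Rightarrow> real"
  assumes N: "N \<in> M \<rightarrow>\<^sub>M subprob_algebra K" and h: "h \<in> borel_measurable K" "\<And>y. 0 \<le> h y"
    and int: "integrable (bind M N) h" and int_N: "\<And>x. x \<in> space M \<Longrightarrow> integrable (N x) h"
  shows integrable_integral_bind_nonneg: "integrable M (\<lambda>x. \<integral>y. h y \<partial>N x)"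
    and integral_bind_nonneg: "(\<integral>y. h y \<partial>bind M N) = (\<integral>x. \<integral>y. h y \<partial>N x \<partial>M)"
proof -
  have meas: "(\<lambda>x. \<integral>y. h y \<partial>N x) \<in> borel_measurable M"
    using measurable_compose[OF N integral_measurable_subprob_algebra[OF h(1)]] .
  have nn: "(\<integral>\<^sup>+x. ennreal (\<integral>y. h y \<partial>N x) \<partial>M) = ennreal (\<integral>y. h y \<partial>bind M N)"
    using nn_integral_bind_integral[OF N h int_N] int h(2)
    by (simp add: nn_integral_eq_integral)
  show "integrable M (\<lambda>x. \<integral>y. h y \<partial>N x)"
    using meas nn h(2) by (intro integrableI_nonneg) auto
  show "(\<integral>y. h y \<partial>bind M N) = (\<integral>x. \<integral>y. h y \<partial>N x \<partial>M)"
    using meas nn h(2) by (simp add: integral_eq_nn_integral integral_nonneg)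
qed

lemma integral_bind_real:
  fixes F :: "'b \<Rightarrow> real"
  assumes N: "N \<in> M \<rightarrow>\<^sub>M subprob_algebra K" and F: "F \<in> borel_measurable K"
    and int: "integrable (bind M N) F" and int_N: "\<And>x. x \<in> space M \<Longrightarrow> integrable (N x) F"
  shows "(\<integral>y. F y \<partial>bind M N) = (\<integral>x. \<integral>y. F y \<partial>N x \<partial>M)"
proof -
  let ?pos = "\<lambda>y. max 0 (F y)" and ?neg = "\<lambda>y. max 0 (- F y)"
  have F_split: "F = (\<lambda>y. ?pos y - ?neg y)" by auto
  have pos: "?pos \<in> borel_measurable K" "integrable (bind M N) ?pos"
      "\<And>x. x \<in> space M \<Longrightarrow> integrable (N x) ?pos"
    and neg: "?neg \<in> borel_measurable K" "integrable (bind M N) ?neg"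
      "\<And>x. x \<in> space M \<Longrightarrow> integrable (N x) ?neg"
    using F int int_N by auto
  note pos_bind = integrable_integral_bind_nonneg[OF N pos(1) _ pos(2,3)]
    integral_bind_nonneg[OF N pos(1) _ pos(2,3)]
  note neg_bind = integrable_integral_bind_nonneg[OF N neg(1) _ neg(2,3)]
    integral_bind_nonneg[OF N neg(1) _ neg(2,3)]
  have "(\<integral>y. F y \<partial>bind M N) = (\<integral>y. ?pos y \<partial>bind M N) - (\<integral>y. ?neg y \<partial>bind M N)"
    using pos(2) neg(2) by (subst F_split) (rule Bochner_Integration.integral_diff)
  also have "\<dots> = (\<integral>x. (\<integral>y. ?pos y \<partial>N x) - (\<integral>y. ?neg y \<partial>N x) \<partial>M)"
    using pos_bind neg_bind by (simp add: Bochner_Integration.integral_diff)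
  also have "\<dots> = (\<integral>x. \<integral>y. F y \<partial>N x \<partial>M)"
    using pos(3) neg(3)
    by (intro Bochner_Integration.integral_cong refl) (subst (3) F_split, simp)
  finally show ?thesis .
qed

lemma measurable_bind_target:
  assumes "N \<in> M \<rightarrow>\<^sub>M subprob_algebra K" and "space M \<noteq> {}" and "f \<in> K \<rightarrow>\<^sub>M L"
  shows "f \<in> bind M N \<rightarrow>\<^sub>M L"
  using assms sets_bind[OF subprob_measurableD(2)[OF assms(1)] assms(2)]
  by (simp cong: measurable_cong_sets)

lemma integral_exp_bind_le:
  fixes F :: "'b \<Rightarrow> real"
  assumes N: "N \<in> M \<rightarrow>\<^sub>M subprob_algebra K" and M: "space M \<noteq> {}"
    and F: "F \<in> borel_measurable K"
    and sg_N: "\<And>x. x \<in> space M \<Longrightarrow> subgaussian (N x) \<kappa>' F"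
    and int: "integrable M (\<lambda>x. exp (t * (\<integral>y. F y \<partial>N x)))"
  shows "integrable (bind M N) (\<lambda>z. exp (t * F z))"
    and "(\<integral>z. exp (t * F z) \<partial>bind M N) \<le> exp (\<kappa>' * t\<^sup>2 / 2) * (\<integral>x. exp (t * (\<integral>y. F y \<partial>N x)) \<partial>M)"
proof -
  define C where "C = exp (\<kappa>' * t\<^sup>2 / 2)"
  have "(\<integral>\<^sup>+z. exp (t * F z) \<partial>bind M N) = (\<integral>\<^sup>+x. ennreal (\<integral>z. exp (t * F z) \<partial>N x) \<partial>M)"
    using sg_N F by (intro nn_integral_bind_integral[OF N]) (auto simp: subgaussian_def)
  also have "\<dots> \<le> (\<integral>\<^sup>+x. ennreal (C * exp (t * (\<integral>y. F y \<partial>N x))) \<partial>M)"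
    using sg_N by (intro nn_integral_mono) (auto simp: subgaussian_def C_def exp_add[symmetric] add_ac)
  also have "\<dots> = ennreal (\<integral>x. C * exp (t * (\<integral>y. F y \<partial>N x)) \<partial>M)"
    using int by (intro nn_integral_eq_integral) (auto simp: C_def)
  finally have le: "(\<integral>\<^sup>+z. exp (t * F z) \<partial>bind M N) \<le> ennreal (\<integral>x. C * exp (t * (\<integral>y. F y \<partial>N x)) \<partial>M)" .
  have "F \<in> borel_measurable (bind M N)"
    using N M F by (rule measurable_bind_target)
  then show int_bind: "integrable (bind M N) (\<lambda>z. exp (t * F z))"
    using le by (intro integrableI_nonneg) (auto simp: top.not_eq_extremum le_less_trans)
  have "(\<integral>z. exp (t * F z) \<partial>bind M N) \<le> (\<integral>x. C * exp (t * (\<integral>y. F y \<partial>N x)) \<partial>M)"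
    using le int_bind by (simp add: nn_integral_eq_integral integral_nonneg C_def)
  then show "(\<integral>z. exp (t * F z) \<partial>bind M N) \<le> C * (\<integral>x. exp (t * (\<integral>y. F y \<partial>N x)) \<partial>M)"
    by simp
qed

lemma subgaussian_bind:
  fixes F :: "'b \<Rightarrow> real"
  assumes N: "N \<in> M \<rightarrow>\<^sub>M subprob_algebra K" and M: "space M \<noteq> {}"
    and F: "F \<in> borel_measurable K"
    and sg_N: "\<And>x. x \<in> space M \<Longrightarrow> subgaussian (N x) \<kappa>' F"
    and sg_M: "subgaussian M \<kappa> (\<lambda>x. \<integral>y. F y \<partial>N x)"
  shows "subgaussian (bind M N) (\<kappa> + \<kappa>') F"
proof -
  let ?G = "\<lambda>x. \<integral>y. F y \<partial>N x"
  have "integrable M (\<lambda>x. exp (t * ?G x))" for t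
    using sg_M by (simp add: subgaussian_def)
  note mgf = integral_exp_bind_le[OF N M F sg_N this]
  have int_F: "integrable (bind M N) F"
    using integrable_of_integrable_exp[OF measurable_bind_target[OF N M F]] mgf(1)[of 1] mgf(1)[of "-1"]
    by simp
  have mean: "(\<integral>z. F z \<partial>bind M N) = (\<integral>x. ?G x \<partial>M)"
    using sg_N by (intro integral_bind_real[OF N F int_F]) (simp add: subgaussian_def)
  have "(\<integral>z. exp (t * F z) \<partial>bind M N) \<le> exp (t * (\<integral>z. F z \<partial>bind M N) + (\<kappa> + \<kappa>') * t\<^sup>2 / 2)"
    for t
  proof -
    have "(\<integral>z. exp (t * F z) \<partial>bind M N) \<le> exp (\<kappa>' * t\<^sup>2 / 2) * (\<integral>x. exp (t * ?G x) \<partial>M)"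
      by (rule mgf(2))
    also have "\<dots> \<le> exp (\<kappa>' * t\<^sup>2 / 2) * exp (t * (\<integral>x. ?G x \<partial>M) + \<kappa> * t\<^sup>2 / 2)"
      using sg_M by (intro mult_left_mono) (auto simp: subgaussian_def)
    also have "\<dots> = exp (t * (\<integral>z. F z \<partial>bind M N) + (\<kappa> + \<kappa>') * t\<^sup>2 / 2)"
      by (simp add: mean exp_add[symmetric] algebra_simps add_divide_distrib)
    finally show ?thesis .
  qed
  then show ?thesis
    using int_F mgf(1) by (simp add: subgaussian_def)
qed

lemma coupling_integral_diff_le:
  fixes f :: "'a::{metric_space, second_countable_topology} \<Rightarrow> real"
  assumes \<pi>: "\<pi> \<in> couplings \<mu> \<nu>" and f: "c-lipschitz_on UNIV f"
    and int: "integrable \<mu> f" "integrable \<nu> f"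
    and finite: "(\<integral>\<^sup>+z. dist (fst z) (snd z) \<partial>\<pi>) < \<infinity>"
  shows "(\<integral>x. f x \<partial>\<mu>) - (\<integral>x. f x \<partial>\<nu>) \<le> c * enn2real (\<integral>\<^sup>+z. dist (fst z) (snd z) \<partial>\<pi>)"
proof -
  have sets: "sets \<pi> = sets (borel \<Otimes>\<^sub>M borel)" and \<mu>: "\<mu> = distr \<pi> borel fst"
    and \<nu>: "\<nu> = distr \<pi> borel snd"
    using \<pi> by (auto simp: couplings_def)
  have [measurable]: "fst \<in> \<pi> \<rightarrow>\<^sub>M (borel :: 'a measure)" "snd \<in> \<pi> \<rightarrow>\<^sub>M (borel :: 'a measure)"
    by (simp_all add: measurable_cong_sets[OF sets refl])
  have [measurable]: "f \<in> borel_measurable borel"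
    using f by (intro borel_measurable_continuous_onI lipschitz_on_continuous_on)
  have int_\<pi>: "integrable \<pi> (\<lambda>z. f (fst z))" "integrable \<pi> (\<lambda>z. f (snd z))"
    using int by (simp_all add: \<mu> \<nu> integrable_distr_eq)
  have int_dist: "integrable \<pi> (\<lambda>z. dist (fst z) (snd z))"
    using finite by (intro integrableI_nonneg) auto
  have "(\<integral>x. f x \<partial>\<mu>) - (\<integral>x. f x \<partial>\<nu>) = (\<integral>z. f (fst z) - f (snd z) \<partial>\<pi>)"
    using int_\<pi> by (simp add: \<mu> \<nu> integral_distr)
  also have "\<dots> \<le> (\<integral>z. c * dist (fst z) (snd z) \<partial>\<pi>)"
    using int_\<pi> int_dist lipschitz_onD[OF f]
    by (intro integral_mono) (auto simp: dist_real_def abs_le_iff)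
  also have "\<dots> = c * enn2real (\<integral>\<^sup>+z. dist (fst z) (snd z) \<partial>\<pi>)"
    by (simp add: integral_eq_nn_integral)
  finally show ?thesis .
qed

lemma W1_integral_diff_le:
  fixes f :: "'a::{metric_space, second_countable_topology} \<Rightarrow> real"
  assumes f: "c-lipschitz_on UNIV f" and int: "integrable \<mu> f" "integrable \<nu> f"
    and W: "W1 \<mu> \<nu> \<le> ennreal r" and "r \<ge> 0"
  shows "(\<integral>x. f x \<partial>\<mu>) - (\<integral>x. f x \<partial>\<nu>) \<le> c * r"
proof (rule field_le_epsilon)
  fix e :: real assume "e > 0"
  have c: "c \<ge> 0" using f by (rule lipschitz_on_nonneg)
  define e' where "e' = e / (c + 1)"
  have "e' > 0" using \<open>e > 0\<close> c by (simp add: e'_def)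
  then have "W1 \<mu> \<nu> < ennreal (r + e')"
    using W \<open>r \<ge> 0\<close> by (simp add: le_less_trans ennreal_lessI)
  then obtain \<pi> where \<pi>: "\<pi> \<in> couplings \<mu> \<nu>"
    and close: "(\<integral>\<^sup>+z. dist (fst z) (snd z) \<partial>\<pi>) < ennreal (r + e')"
    unfolding W1_def by (auto simp: INF_less_iff)
  have "(\<integral>x. f x \<partial>\<mu>) - (\<integral>x. f x \<partial>\<nu>) \<le> c * enn2real (\<integral>\<^sup>+z. dist (fst z) (snd z) \<partial>\<pi>)"
    using close by (intro coupling_integral_diff_le[OF \<pi> f int]) (simp add: order.strict_trans[OF _ ennreal_less_top])
  also have "\<dots> \<le> c * (r + e')"
    using close \<open>r \<ge> 0\<close> \<open>e' > 0\<close> c by (intro mult_left_mono enn2real_leI) auto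
  also have "\<dots> \<le> c * r + e"
    using \<open>e > 0\<close> c by (simp add: e'_def field_simps)
  finally show "(\<integral>x. f x \<partial>\<mu>) - (\<integral>x. f x \<partial>\<nu>) \<le> c * r + e" .
qed

definition weighted_lipschitz :: "nat \<Rightarrow> (nat \<Rightarrow> real) \<Rightarrow> ((nat \<Rightarrow> 'a::metric_space) \<Rightarrow> real) \<Rightarrow> bool"
  where "weighted_lipschitz n a F \<longleftrightarrow>
    (\<forall>x\<in>{..<n} \<rightarrow>\<^sub>E UNIV. \<forall>y\<in>{..<n} \<rightarrow>\<^sub>E UNIV. \<bar>F x - F y\<bar> \<le> (\<Sum>j<n. a j * dist (x j) (y j)))"

lemma weighted_lipschitzI:
  assumes "\<And>x y. x \<in> {..<n} \<rightarrow>\<^sub>E UNIV \<Longrightarrow> y \<in> {..<n} \<rightarrow>\<^sub>E UNIV \<Longrightarrow>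
    F x - F y \<le> (\<Sum>j<n. a j * dist (x j) (y j))"
  shows "weighted_lipschitz n a F"
  unfolding weighted_lipschitz_def
proof (intro ballI)
  fix x y :: "nat \<Rightarrow> 'a" assume "x \<in> {..<n} \<rightarrow>\<^sub>E UNIV" "y \<in> {..<n} \<rightarrow>\<^sub>E UNIV"
  then have "F x - F y \<le> (\<Sum>j<n. a j * dist (x j) (y j))"
    "F y - F x \<le> (\<Sum>j<n. a j * dist (y j) (x j))"
    using assms by blast+
  then show "\<bar>F x - F y\<bar> \<le> (\<Sum>j<n. a j * dist (x j) (y j))"
    by (simp add: abs_le_iff dist_commute)
qed

lemma weighted_lipschitz_0: "weighted_lipschitz 0 a F"
  by (simp add: weighted_lipschitz_def)

lemma isCont_weighted_lipschitz_restrict: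
  assumes F: "weighted_lipschitz n a F"
  shows "isCont (\<lambda>x. F (restrict x {..<n})) z"
proof -
  let ?F = "\<lambda>x. F (restrict x {..<n})" and ?g = "\<lambda>x. \<Sum>j<n. a j * dist (x j) (z j)"
  have "isCont (\<lambda>x. x j) z" for j :: nat
    using continuous_on_eq_continuous_at[OF open_UNIV, THEN iffD1,
        OF continuous_on_product_coordinates] by blast
  then have "isCont ?g z"
    by (intro continuous_intros)
  then have "(?g \<longlongrightarrow> 0) (at z)"
    using isContD by fastforce
  moreover have "norm (?F x - ?F z) \<le> ?g x" for x
  proof -
    have "restrict x {..<n} \<in> {..<n} \<rightarrow>\<^sub>E UNIV" "restrict z {..<n} \<in> {..<n} \<rightarrow>\<^sub>E UNIV"
      by auto
    then have "\<bar>?F x - ?F z\<bar> \<le> (\<Sum>j<n. a j * dist (restrict x {..<n} j) (restrict z {..<n} j))"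
      using F unfolding weighted_lipschitz_def by blast
    also have "\<dots> = ?g x"
      by (intro sum.cong) auto
    finally show ?thesis
      by simp
  qed
  ultimately have "((\<lambda>x. ?F x - ?F z) \<longlongrightarrow> 0) (at z)"
    using Lim_null_comparison[OF always_eventually, of "\<lambda>x. ?F x - ?F z" ?g] by blast
  then show ?thesis
    unfolding isCont_def by (rule LIM_zero_cancel)
qed

lemma measurable_PiM_into_UNIV: "(\<lambda>x. x) \<in> PiM I (\<lambda>_. borel) \<rightarrow>\<^sub>M PiM UNIV (\<lambda>_. borel)"
proof (rule measurable_PiM_single')
  fix i
  show "(\<lambda>x. x i) \<in> PiM I (\<lambda>_. borel) \<rightarrow>\<^sub>M borel"
  proof (cases "i \<in> I")
    case False
    then have "x i = undefined" if "x \<in> space (PiM I (\<lambda>_. borel))" for x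
      using that by (intro PiE_arb[of x I]) (simp_all add: space_PiM)
    then show ?thesis
      by (subst measurable_cong[where g="\<lambda>_. undefined"]) simp_all
  qed simp
qed simp

lemma weighted_lipschitz_borel_measurable:
  fixes F :: "(nat \<Rightarrow> 'a::{metric_space, second_countable_topology}) \<Rightarrow> real"
  assumes "weighted_lipschitz n a F"
  shows "F \<in> borel_measurable (PiM {..<n} (\<lambda>_. borel))"
proof -
  have "(\<lambda>x. F (restrict x {..<n})) \<in> borel_measurable (PiM UNIV (\<lambda>_. borel))"
    using isCont_weighted_lipschitz_restrict[OF assms]
    by (simp add: measurable_cong_sets[OF sets_PiM_equal_borel refl] continuous_at_imp_continuous_on
        borel_measurable_continuous_onI)
  from measurable_compose[OF measurable_PiM_into_UNIV this]
  show ?thesis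
    by (rule measurable_cong[THEN iffD1, rotated]) (simp add: space_PiM)
qed

definition accumulated_weight :: "real \<Rightarrow> nat \<Rightarrow> (nat \<Rightarrow> real) \<Rightarrow> nat \<Rightarrow> real" where
  "accumulated_weight L n a k = (\<Sum>j=k..<n. a j * L ^ (j - k))"

lemma accumulated_weight_last: "accumulated_weight L (Suc n) a n = a n"
  by (simp add: accumulated_weight_def)

lemma accumulated_weight_fold:
  assumes "k < n"
  shows "accumulated_weight L n (a(n - 1 := a (n - 1) + L * a n)) k = accumulated_weight L (Suc n) a k"
proof -
  obtain m where n: "n = Suc m" and "k \<le> m"
    using assms by (metis less_Suc_eq_le not0_implies_Suc not_less_zero)
  then have "accumulated_weight L n (a(n - 1 := a (n - 1) + L * a n)) k
      = (\<Sum>j=k..<m. a j * L ^ (j - k)) + (a m + L * a n) * L ^ (m - k)"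
    by (simp add: accumulated_weight_def)
  also have "\<dots> = (\<Sum>j=k..<m. a j * L ^ (j - k)) + a m * L ^ (m - k) + a n * L ^ (n - k)"
    using \<open>k \<le> m\<close> by (simp add: n algebra_simps Suc_diff_le)
  also have "\<dots> = accumulated_weight L (Suc n) a k"
    using \<open>k \<le> m\<close> by (simp add: n accumulated_weight_def)
  finally show ?thesis .
qed

lemma sum_accumulated_weight_Suc:
  "(\<Sum>k<n. (accumulated_weight L n (a(n - 1 := a (n - 1) + L * a n)) k)\<^sup>2) + (a n)\<^sup>2
     = (\<Sum>k<Suc n. (accumulated_weight L (Suc n) a k)\<^sup>2)"
proof -
  have "(\<Sum>k<n. (accumulated_weight L n (a(n - 1 := a (n - 1) + L * a n)) k)\<^sup>2)
      = (\<Sum>k<n. (accumulated_weight L (Suc n) a k)\<^sup>2)"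
    by (intro sum.cong refl arg_cong[where f="\<lambda>x. x\<^sup>2"] accumulated_weight_fold) simp
  then show ?thesis
    by (simp add: accumulated_weight_last)
qed

lemma accumulated_weight_one: "k \<le> n \<Longrightarrow> accumulated_weight L n (\<lambda>_. 1) k = (\<Sum>i<n - k. L ^ i)"
proof (induction n)
  case (Suc n)
  show ?case
  proof (cases "k = Suc n")
    case False
    then have "k \<le> n" using Suc.prems by simp
    then have "accumulated_weight L (Suc n) (\<lambda>_. 1) k = accumulated_weight L n (\<lambda>_. 1) k + L ^ (n - k)"
      by (simp add: accumulated_weight_def)
    then show ?thesis
      using Suc.IH \<open>k \<le> n\<close> by (simp add: Suc_diff_le)
  qed (simp add: accumulated_weight_def)
qed (simp add: accumulated_weight_def)

lemma sum_accumulated_weight_one: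
  "(\<Sum>k<n. (accumulated_weight L n (\<lambda>_. 1) k)\<^sup>2) = (\<Sum>m=1..n. (\<Sum>k<m. L ^ k)\<^sup>2)"
proof -
  have "(\<Sum>k<n. (accumulated_weight L n (\<lambda>_. 1) k)\<^sup>2) = (\<Sum>k<n. (\<Sum>i<n - k. L ^ i)\<^sup>2)"
    by (simp add: accumulated_weight_one)
  also have "\<dots> = (\<Sum>m=1..n. (\<Sum>k<m. L ^ k)\<^sup>2)"
    by (rule sum.reindex_bij_witness[where i="\<lambda>m. n - m" and j="\<lambda>k. n - k"]) auto
  finally show ?thesis .
qed

definition next_law :: "('a \<Rightarrow> 'a measure) \<Rightarrow> 'a measure \<Rightarrow> nat \<Rightarrow> (nat \<Rightarrow> 'a) \<Rightarrow> 'a measure" where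
  "next_law p P1 n x = (if n = 0 then P1 else p (x (n - 1)))"

lemma joint_Suc_next_law:
  "joint p P1 (Suc n) =
     bind (joint p P1 n) (\<lambda>x. distr (next_law p P1 n x) (PiM {..<Suc n} (\<lambda>_. borel)) (\<lambda>y. x(n := y)))"
  by (simp add: next_law_def)

context
  fixes P1 :: "'a::topological_space measure" and p :: "'a \<Rightarrow> 'a measure"
  assumes P1: "P1 \<in> space (prob_algebra borel)" and p: "p \<in> borel \<rightarrow>\<^sub>M prob_algebra borel"
begin

lemma measurable_next_law: "next_law p P1 n \<in> PiM {..<n} (\<lambda>_. borel) \<rightarrow>\<^sub>M prob_algebra borel"
proof (cases "n = 0")
  case False
  have "(\<lambda>x. x (n - 1)) \<in> PiM {..<n} (\<lambda>_. borel) \<rightarrow>\<^sub>M (borel :: 'a measure)"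
    using False by simp
  from measurable_compose[OF this p] False show ?thesis
    by (simp add: next_law_def[abs_def])
qed (simp add: next_law_def[abs_def] P1)

lemma next_law_prob_algebra: "next_law p P1 n x \<in> space (prob_algebra borel)"
  using P1 measurable_space[OF p] by (simp add: next_law_def)

lemma measurable_joint_kernel:
  "(\<lambda>x. distr (next_law p P1 n x) (PiM {..<Suc n} (\<lambda>_. borel)) (\<lambda>y. x(n := y)))
     \<in> PiM {..<n} (\<lambda>_. borel) \<rightarrow>\<^sub>M prob_algebra (PiM {..<Suc n} (\<lambda>_. borel))"
proof (rule measurable_distr_prob_space2[OF measurable_next_law])
  show "(\<lambda>(x, y). x(n := y)) \<in> PiM {..<n} (\<lambda>_. borel) \<Otimes>\<^sub>M borel \<rightarrow>\<^sub>M PiM {..<Suc n} (\<lambda>_. borel)"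
    using measurable_add_dim[of n "{..<n}" "\<lambda>_. borel :: 'a measure"] by (simp add: lessThan_Suc)
qed

lemma joint_prob_algebra: "joint p P1 n \<in> space (prob_algebra (PiM {..<n} (\<lambda>_. borel)))"
proof (induction n)
  case 0
  have "prob_space (PiM {} (\<lambda>_. borel :: 'a measure))"
    by (intro prob_space_PiM) auto
  then show ?case
    by (simp add: space_prob_algebra)
next
  case (Suc n)
  show ?case
    unfolding joint_Suc_next_law
    using prob_space_bind'[OF Suc measurable_joint_kernel] sets_bind'[OF Suc measurable_joint_kernel]
    by (simp add: space_prob_algebra)
qed

lemma sets_joint: "sets (joint p P1 n) = sets (PiM {..<n} (\<lambda>_. borel))"
  using joint_prob_algebra by (simp add: space_prob_algebra)

lemma space_joint: "space (joint p P1 n) = {..<n} \<rightarrow>\<^sub>E UNIV"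
  using sets_joint by (simp add: sets_eq_imp_space_eq space_PiM)

lemma subgaussian_joint_Suc:
  assumes F: "F \<in> borel_measurable (PiM {..<Suc n} (\<lambda>_. borel))"
    and sections: "\<And>x. x \<in> {..<n} \<rightarrow>\<^sub>E UNIV \<Longrightarrow> subgaussian (next_law p P1 n x) \<kappa>' (\<lambda>y. F (x(n := y)))"
    and mean: "subgaussian (joint p P1 n) \<kappa> (\<lambda>x. \<integral>y. F (x(n := y)) \<partial>next_law p P1 n x)"
  shows "subgaussian (joint p P1 (Suc n)) (\<kappa> + \<kappa>') F"
  unfolding joint_Suc_next_law
proof (rule subgaussian_bind[OF _ _ F])
  have update: "(\<lambda>y. x(n := y)) \<in> next_law p P1 n x \<rightarrow>\<^sub>M PiM {..<Suc n} (\<lambda>_. borel)"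
    if "x \<in> {..<n} \<rightarrow>\<^sub>E UNIV" for x
  proof -
    have sets: "sets (next_law p P1 n x) = sets borel"
      using next_law_prob_algebra by (simp add: space_prob_algebra)
    have "(\<lambda>y. x(n := y)) \<in> borel \<rightarrow>\<^sub>M PiM (insert n {..<n}) (\<lambda>_. borel :: 'a measure)"
      using measurable_component_update[of x "{..<n}"] that by (simp add: space_PiM)
    then show ?thesis
      by (simp add: lessThan_Suc measurable_cong_sets[OF sets refl])
  qed
  show "(\<lambda>x. distr (next_law p P1 n x) (PiM {..<Suc n} (\<lambda>_. borel)) (\<lambda>y. x(n := y)))
      \<in> joint p P1 n \<rightarrow>\<^sub>M subprob_algebra (PiM {..<Suc n} (\<lambda>_. borel))"
    using measurable_prob_algebraD[OF measurable_joint_kernel] sets_joint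
    by (simp cong: measurable_cong_sets)
  show "space (joint p P1 n) \<noteq> {}"
    using joint_prob_algebra prob_space.not_empty by (auto simp: space_prob_algebra)
  show "subgaussian (distr (next_law p P1 n x) (PiM {..<Suc n} (\<lambda>_. borel)) (\<lambda>y. x(n := y))) \<kappa>' F"
    if "x \<in> space (joint p P1 n)" for x
    using that sections by (simp add: space_joint subgaussian_distr[OF update F])
  show "subgaussian (joint p P1 n) \<kappa>
      (\<lambda>x. \<integral>y. F y \<partial>distr (next_law p P1 n x) (PiM {..<Suc n} (\<lambda>_. borel)) (\<lambda>y. x(n := y)))"
    using mean by (subst subgaussian_cong) (simp_all add: space_joint integral_distr[OF update F])
qed

end

lemma weighted_lipschitz_update:
  assumes F: "weighted_lipschitz (Suc n) a F"
    and x: "x \<in> {..<n} \<rightarrow>\<^sub>E UNIV" and x': "x' \<in> {..<n} \<rightarrow>\<^sub>E UNIV"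
  shows "\<bar>F (x(n := u)) - F (x'(n := v))\<bar> \<le> (\<Sum>j<n. a j * dist (x j) (x' j)) + a n * dist u v"
proof -
  have "x(n := u) \<in> {..<Suc n} \<rightarrow>\<^sub>E UNIV" "x'(n := v) \<in> {..<Suc n} \<rightarrow>\<^sub>E UNIV"
    using x x' by (auto simp: PiE_iff extensional_def)
  then have "\<bar>F (x(n := u)) - F (x'(n := v))\<bar> \<le> (\<Sum>j<Suc n. a j * dist ((x(n := u)) j) ((x'(n := v)) j))"
    using F unfolding weighted_lipschitz_def by blast
  also have "(\<Sum>j<n. a j * dist ((x(n := u)) j) ((x'(n := v)) j)) = (\<Sum>j<n. a j * dist (x j) (x' j))"
    by (intro sum.cong) auto
  then have "(\<Sum>j<Suc n. a j * dist ((x(n := u)) j) ((x'(n := v)) j))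
      = (\<Sum>j<n. a j * dist (x j) (x' j)) + a n * dist u v"
    by simp
  finally show ?thesis .
qed

lemma weighted_lipschitz_integral_next_law:
  fixes F :: "(nat \<Rightarrow> 'a::{metric_space, second_countable_topology}) \<Rightarrow> real"
  assumes L: "L \<ge> 0" and p: "p \<in> borel \<rightarrow>\<^sub>M prob_algebra borel"
    and W: "\<forall>x y. W1 (p x) (p y) \<le> ennreal (L * dist x y)"
    and a: "\<forall>j. 0 \<le> a j" and F: "weighted_lipschitz (Suc n) a F"
    and int: "\<And>x z. x \<in> {..<n} \<rightarrow>\<^sub>E UNIV \<Longrightarrow> integrable (next_law p P1 n z) (\<lambda>y. F (x(n := y)))"
  shows "weighted_lipschitz n (a(n - 1 := a (n - 1) + L * a n))
           (\<lambda>x. \<integral>y. F (x(n := y)) \<partial>next_law p P1 n x)"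
proof (cases n)
  case (Suc m)
  show ?thesis
  proof (rule weighted_lipschitzI)
    fix x x' :: "nat \<Rightarrow> 'a" assume x: "x \<in> {..<n} \<rightarrow>\<^sub>E UNIV" and x': "x' \<in> {..<n} \<rightarrow>\<^sub>E UNIV"
    let ?D = "\<Sum>j<n. a j * dist (x j) (x' j)"
    have law: "next_law p P1 n z = p (z m)" for z
      by (simp add: next_law_def Suc)
    have int_p: "integrable (p z) (\<lambda>y. F (w(n := y)))" if "w \<in> {..<n} \<rightarrow>\<^sub>E UNIV" for w z
      using int[OF that, of "\<lambda>_. z"] by (simp add: law)
    have "prob_space (p (x m))"
      using measurable_space[OF p] by (simp add: space_prob_algebra)
    have "F (x(n := y)) - F (x'(n := y)) \<le> ?D" for y
      using weighted_lipschitz_update[OF F x x', of y y] by simp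
    then have "(\<integral>y. F (x(n := y)) - F (x'(n := y)) \<partial>p (x m)) \<le> (\<integral>y. ?D \<partial>p (x m))"
      using int_p[OF x] int_p[OF x'] \<open>prob_space (p (x m))\<close>
      by (intro integral_mono) (auto simp: prob_space.finite_measure finite_measure.integrable_const)
    also have "\<dots> = ?D"
      using \<open>prob_space (p (x m))\<close> by (simp add: prob_space.prob_space)
    finally have same_law: "(\<integral>y. F (x(n := y)) \<partial>p (x m)) - (\<integral>y. F (x'(n := y)) \<partial>p (x m)) \<le> ?D"
      using int_p[OF x] int_p[OF x'] by simp
    have "(a n)-lipschitz_on UNIV (\<lambda>y. F (x'(n := y)))"
      using weighted_lipschitz_update[OF F x' x'] a by (intro lipschitz_onI) (auto simp: dist_real_def)
    then have other_law: "(\<integral>y. F (x'(n := y)) \<partial>p (x m)) - (\<integral>y. F (x'(n := y)) \<partial>p (x' m))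
        \<le> a n * (L * dist (x m) (x' m))"
      using W L int_p[OF x'] by (intro W1_integral_diff_le) auto
    have "(\<Sum>j<n. (a(n - 1 := a (n - 1) + L * a n)) j * dist (x j) (x' j))
        = ?D + a n * (L * dist (x m) (x' m))"
      by (simp add: Suc sum.lessThan_Suc algebra_simps)
    then show "(\<integral>y. F (x(n := y)) \<partial>next_law p P1 n x) - (\<integral>y. F (x'(n := y)) \<partial>next_law p P1 n x')
        \<le> (\<Sum>j<n. (a(n - 1 := a (n - 1) + L * a n)) j * dist (x j) (x' j))"
      using same_law other_law by (simp add: law)
  qed
qed (simp add: weighted_lipschitz_0)

lemma subgaussian_joint_weighted:
  fixes P1 :: "'a::{metric_space, second_countable_topology} measure" and p :: "'a \<Rightarrow> 'a measure"
  assumes L: "L \<ge> 0"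
    and P1: "P1 \<in> space (prob_algebra borel)" and p: "p \<in> borel \<rightarrow>\<^sub>M prob_algebra borel"
    and GC_P1: "GC dist \<kappa>1 P1" and GC_p: "\<forall>x. GC dist \<kappa>1 (p x)"
    and W: "\<forall>x y. W1 (p x) (p y) \<le> ennreal (L * dist x y)"
    and "\<forall>j. 0 < a j" and "weighted_lipschitz n a F"
  shows "subgaussian (joint p P1 n) (\<kappa>1 * (\<Sum>k<n. (accumulated_weight L n a k)\<^sup>2)) F"
  using assms(7,8)
proof (induction n arbitrary: a F)
  case 0
  show ?case
    by (simp add: PiM_empty subgaussian_def integrable_count_space lebesgue_integral_count_space_finite)
next
  case (Suc n)
  define a' where "a' = a(n - 1 := a (n - 1) + L * a n)"
  have sections: "subgaussian (next_law p P1 n z) (\<kappa>1 * (a n)\<^sup>2) (\<lambda>y. F (x(n := y)))"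
    if "x \<in> {..<n} \<rightarrow>\<^sub>E UNIV" for x z
  proof -
    have lip: "\<bar>F (x(n := u)) - F (x(n := v))\<bar> \<le> a n * dist u v" for u v
      using weighted_lipschitz_update[OF Suc.prems(2) that that, of u v] by (simp add: fun_upd_def)
    have "GC dist \<kappa>1 (next_law p P1 n z)"
      using GC_P1 GC_p by (simp add: next_law_def)
    from GC_imp_subgaussian_lipschitz[OF this _ lip] show ?thesis
      using Suc.prems(1) by blast
  qed
  then have "integrable (next_law p P1 n z) (\<lambda>y. F (x(n := y)))" if "x \<in> {..<n} \<rightarrow>\<^sub>E UNIV" for x z
    using that by (simp add: subgaussian_def)
  moreover have "\<forall>j. 0 \<le> a j"
    using Suc.prems(1) by (simp add: less_imp_le)
  ultimately have "weighted_lipschitz n a' (\<lambda>x. \<integral>y. F (x(n := y)) \<partial>next_law p P1 n x)"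
    unfolding a'_def using weighted_lipschitz_integral_next_law[OF L p W _ Suc.prems(2)] by blast
  moreover have "\<forall>j. 0 < a' j"
    using Suc.prems(1) L by (simp add: a'_def add_pos_nonneg less_imp_le)
  ultimately have "subgaussian (joint p P1 n) (\<kappa>1 * (\<Sum>k<n. (accumulated_weight L n a' k)\<^sup>2))
      (\<lambda>x. \<integral>y. F (x(n := y)) \<partial>next_law p P1 n x)"
    using Suc.IH by blast
  with sections have "subgaussian (joint p P1 (Suc n))
      (\<kappa>1 * (\<Sum>k<n. (accumulated_weight L n a' k)\<^sup>2) + \<kappa>1 * (a n)\<^sup>2) F"
    using weighted_lipschitz_borel_measurable[OF Suc.prems(2)] by (intro subgaussian_joint_Suc[OF P1 p])
  also have "\<kappa>1 * (\<Sum>k<n. (accumulated_weight L n a' k)\<^sup>2) + \<kappa>1 * (a n)\<^sup>2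
      = \<kappa>1 * (\<Sum>k<Suc n. (accumulated_weight L (Suc n) a k)\<^sup>2)"
    unfolding a'_def sum_accumulated_weight_Suc[symmetric] by (rule distrib_left[symmetric])
  finally show ?case .
qed

theorem theorem1p1:
  fixes P1 :: "'a::polish_space measure" and p :: "'a \<Rightarrow> 'a measure"
    and \<kappa>1 L :: real and n :: nat
  assumes "n \<ge> 1" and "\<kappa>1 > 0" and "L \<ge> 0"
    and "P1 \<in> space (prob_algebra borel)"
    and "p \<in> borel \<rightarrow>\<^sub>M prob_algebra borel"
    and "GC dist \<kappa>1 P1"
    and "\<forall>x. GC dist \<kappa>1 (p x)"
    and "\<forall>x. Prob1 (p x)"
    and "\<forall>x y. W1 (p x) (p y) \<le> ennreal (L * dist x y)"
  shows "GC (dist1 n) (\<kappa>1 * (\<Sum>m=1..n. (\<Sum>k<m. L ^ k)\<^sup>2)) (joint p P1 n)"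
  unfolding GC_iff_subgaussian
proof (intro allI impI)
  \<comment> \<open>The hypotheses \<open>n \<ge> 1\<close>, \<open>\<kappa>1 > 0\<close> and \<open>Prob1 (p x)\<close> are not needed: the case
    \<open>n = 0\<close> is trivial, and integrability of Lipschitz functions is part of GC.\<close>
  fix F :: "(nat \<Rightarrow> 'a) \<Rightarrow> real"
  assume "\<forall>x\<in>space (joint p P1 n). \<forall>y\<in>space (joint p P1 n). \<bar>F x - F y\<bar> \<le> dist1 n x y"
  then have "weighted_lipschitz n (\<lambda>_. 1) F"
    by (simp add: weighted_lipschitz_def dist1_def space_joint[OF assms(4,5)])
  from subgaussian_joint_weighted[OF assms(3-7,9) _ this]
  show "subgaussian (joint p P1 n) (\<kappa>1 * (\<Sum>m=1..n. (\<Sum>k<m. L ^ k)\<^sup>2)) F"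
    by (simp add: sum_accumulated_weight_one)
qed

end
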